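(* Let $I$ be an ideal on $\mathbb{N}$ with $\mathrm{Fin}\subseteq I$ and $I\neq\mathrm{Fin}$, and suppose there is an infinite set $C\subseteq\mathbb{N}$ such that every $D\subseteq C$ with $D\in I$ is finite and $\mathbb{N}\setminus C\in I$ (e.g. $C$ witnessing that $I$ has the supset property). Then there exists $(x_n)\in\ell_1^{*}$ such that $A(x_n)$ is a closed interval and $A_I(x_n)$ is meager and Lebesgue null.
   Context: $\ell_1^{*}=\{(x_n)\in\ell_1 : x_n\neq 0\text{ for every }n\}$. An ideal on $\mathbb{N}$ is a family $I\subseteq P(\mathbb{N})$ closed under finite unions and subsets with $\mathbb{N}\notin I$; $\mathrm{Fin}$ is the ideal of finite sets. An ideal is dense if every infinite set has an infinite subset in $I$. For a non-dense ideal $I$ and an infinite $A$ all of whose subsets belonging to $I$ are finite, $I$ has the supset property if there exists $C\supseteq A$ such that every $D\subseteq C$ with $D\in I$ is finite and $\mathbb{N}\setminus C\in I$. $A(x_n)=\{\sum_{n\in A}x_n : A\subseteq\mathbb{N}\}$, $A_I(x_n)=\{\sum_{n\in A}x_n : A\in I\}$. *)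

theory Defs
  imports "HOL-Analysis.Analysis"
begin

definition is_ideal :: "nat set set \<Rightarrow> bool" where
  "is_ideal I \<longleftrightarrow> (\<forall>A\<in>I. \<forall>B\<in>I. A \<union> B \<in> I) \<and> (\<forall>A\<in>I. \<forall>B. B \<subseteq> A \<longrightarrow> B \<in> I) \<and> UNIV \<notin> I"

definition Fin :: "nat set set" where
  "Fin = {A. finite A}"

definition subsum :: "(nat \<Rightarrow> real) \<Rightarrow> nat set \<Rightarrow> real" where
  "subsum x A = (\<Sum>n. if n \<in> A then x n else 0)"

definition ell1_star :: "(nat \<Rightarrow> real) set" where
  "ell1_star = {x. summable (\<lambda>n. \<bar>x n\<bar>) \<and> (\<forall>n. x n \<noteq> 0)}"

definition achievement_set :: "(nat \<Rightarrow> real) \<Rightarrow> real set" where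
  "achievement_set x = subsum x ` UNIV"

definition ideal_achievement_set :: "nat set set \<Rightarrow> (nat \<Rightarrow> real) \<Rightarrow> real set" where
  "ideal_achievement_set I x = subsum x ` I"

definition nowhere_dense :: "real set \<Rightarrow> bool" where
  "nowhere_dense S \<longleftrightarrow> interior (closure S) = {}"

definition meager :: "real set \<Rightarrow> bool" where
  "meager S \<longleftrightarrow> (\<exists>F :: nat \<Rightarrow> real set. (\<forall>n. nowhere_dense (F n)) \<and> S \<subseteq> (\<Union>n. F n))"

end

theory Submission imports Defs "HOL-Library.Nat_Bijection" begin

text \<open>
  Take x n = 2^-(n+1); binary expansions show that its subsums fill [0,1].  Every A in I meets C
  in a finite set, so the sum over A is a finite dyadic sum plus a sum over a set disjoint from C.
  These latter sums form a closed set K which, for every N, is covered by 2^(N - |C \<inter> [0,N)|)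
  intervals of length 2^-N; as C is infinite, K is null.  Hence the ideal achievement set lies in
  countably many translates of a closed null, hence nowhere dense, set.
\<close>

lemma summable_restrict_abs:
  assumes "summable (\<lambda>n. \<bar>x n\<bar>)"
  shows "summable (\<lambda>n. if n \<in> A then x n else (0::real))"
  by (rule summable_comparison_test[OF _ assms]) auto

lemma subsum_finite: "finite F \<Longrightarrow> subsum x F = sum x F"
  unfolding subsum_def by (subst suminf_finite[of F]) (auto intro: sum.cong)

lemma subsum_Int_Diff:
  assumes "summable (\<lambda>n. \<bar>x n\<bar>)"
  shows "subsum x A = subsum x (A \<inter> C) + subsum x (A - C)"
proof -
  have "subsum x (A \<inter> C) + subsum x (A - C) =
     (\<Sum>n. (if n \<in> A \<inter> C then x n else 0) + (if n \<in> A - C then x n else 0))"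
    unfolding subsum_def
    by (rule suminf_add[OF summable_restrict_abs[OF assms] summable_restrict_abs[OF assms]])
  also have "\<dots> = subsum x A" unfolding subsum_def by (rule suminf_cong) auto
  finally show ?thesis by simp
qed

lemma subsum_bounds:
  assumes "summable x" and "\<And>n. x n \<ge> 0"
  shows "0 \<le> subsum x A" "subsum x A \<le> suminf x"
proof -
  have "summable (\<lambda>n. if n \<in> A then x n else 0)"
    using assms by (intro summable_restrict_abs) simp
  then show "0 \<le> subsum x A" "subsum x A \<le> suminf x"
    unfolding subsum_def using assms by (auto intro!: suminf_nonneg suminf_le)
qed

lemma subsum_in_initial_segment_interval:
  assumes "summable x" and "\<And>n. x n \<ge> 0"
  shows "subsum x A \<in> {sum x ({..<N} \<inter> A) .. sum x ({..<N} \<inter> A) + (\<Sum>n. x (n + N))}"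
proof -
  let ?g = "\<lambda>n. if n \<in> A then x n else 0"
  have g: "summable ?g" using assms by (intro summable_restrict_abs) simp
  have "subsum x A = (\<Sum>n. ?g (n + N)) + (\<Sum>i<N. ?g i)"
    unfolding subsum_def by (rule suminf_split_initial_segment[OF g])
  also have "(\<Sum>i<N. ?g i) = sum x ({..<N} \<inter> A)"
    by (simp add: sum.inter_restrict)
  finally have split: "subsum x A = (\<Sum>n. ?g (n + N)) + sum x ({..<N} \<inter> A)" .
  have "summable (\<lambda>n. ?g (n + N))" using g by (subst summable_iff_shift)
  moreover have "summable (\<lambda>n. x (n + N))" using assms(1) by (subst summable_iff_shift)
  ultimately have "0 \<le> (\<Sum>n. ?g (n + N))" "(\<Sum>n. ?g (n + N)) \<le> (\<Sum>n. x (n + N))"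
    using assms(2) by (auto intro!: suminf_nonneg suminf_le)
  then show ?thesis unfolding split by simp
qed

definition dyadic :: "nat \<Rightarrow> real" where "dyadic n = (1/2)^Suc n"

lemma dyadic_pos: "dyadic n > 0" unfolding dyadic_def by simp

lemma sums_dyadic: "dyadic sums 1" unfolding dyadic_def using power_half_series by simp

lemma summable_dyadic: "summable dyadic" using sums_dyadic by (rule sums_summable)

lemma suminf_dyadic_shift: "(\<Sum>n. dyadic (n + N)) = (1/2)^N"
proof -
  have "(\<lambda>n. (1/2)^N * dyadic n) sums ((1/2)^N * 1)" by (rule sums_mult[OF sums_dyadic])
  then show ?thesis by (simp add: dyadic_def power_add sums_unique[symmetric] mult_ac)
qed

lemma dyadic_in_ell1_star: "dyadic \<in> ell1_star"
  unfolding ell1_star_def dyadic_def using summable_dyadic[unfolded dyadic_def] by simp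

lemma floor_double_minus_double_floor: "\<lfloor>2 * y\<rfloor> - 2 * \<lfloor>y\<rfloor> \<in> {0, 1}" for y :: real
proof -
  have "2 * \<lfloor>y\<rfloor> \<le> \<lfloor>2 * y\<rfloor>" by (subst le_floor_iff) (use of_int_floor_le[of y] in simp)
  moreover have "\<lfloor>2 * y\<rfloor> < 2 * \<lfloor>y\<rfloor> + 2" by (subst floor_less_iff) (simp, linarith)
  ultimately show ?thesis by auto
qed

text \<open>The digits of \<open>t\<close> are read off the truncations \<open>f n = \<lfloor>t 2\<^sup>n\<rfloor>\<close>, whose
  \<open>n\<close>-th partial binary sum is \<open>f n / 2\<^sup>n\<close>.\<close>
lemma subsum_dyadic_binary_expansion:
  assumes "0 \<le> t" "t < 1"
  shows "\<exists>A. subsum dyadic A = t"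
proof -
  define f where "f n = \<lfloor>t * 2^n\<rfloor>" for n
  define A where "A = {n. f (Suc n) - 2 * f n = 1}"
  have f_Suc: "f (Suc n) = 2 * f n + (if n \<in> A then 1 else 0)" for n
  proof -
    have "f (Suc n) - 2 * f n \<in> {0, 1}"
      unfolding f_def using floor_double_minus_double_floor[of "t * 2^n"] by (simp add: mult_ac)
    then show ?thesis unfolding A_def by auto
  qed
  have partial_sums: "(\<Sum>k<n. if k \<in> A then dyadic k else 0) = f n / 2^n" for n
  proof (induction n)
    case 0 show ?case using assms by (simp add: f_def floor_eq_iff)
  next
    case (Suc n) then show ?case by (simp add: f_Suc dyadic_def field_simps)
  qed
  have approx: "\<bar>f n / 2^n - t\<bar> \<le> (1/2)^n" for n
  proof -
    have "\<bar>of_int (f n) - t * 2^n\<bar> \<le> 1" unfolding f_def by linarith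
    then have "\<bar>of_int (f n) - t * 2^n\<bar> / 2^n \<le> 1 / 2^n" by (simp add: divide_right_mono)
    moreover have "\<bar>of_int (f n) - t * 2^n\<bar> / 2^n = \<bar>f n / 2^n - t\<bar>"
      by (simp add: field_simps abs_div_pos[symmetric])
    ultimately show ?thesis by (simp add: power_one_over)
  qed
  have "(\<lambda>n. (1/2::real)^n) \<longlonglongrightarrow> 0" by (rule LIMSEQ_realpow_zero) auto
  then have "(\<lambda>n. f n / 2^n - t) \<longlonglongrightarrow> 0"
    by (rule Lim_null_comparison[rotated]) (use approx in simp)
  then have "(\<lambda>n. if n \<in> A then dyadic n else 0) sums t"
    unfolding sums_def partial_sums by (simp add: LIM_zero_iff)
  then show ?thesis unfolding subsum_def by (auto dest: sums_unique)
qed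

lemma achievement_set_dyadic: "achievement_set dyadic = {0..1}"
proof (intro equalityI subsetI)
  fix t assume "t \<in> achievement_set dyadic"
  then show "t \<in> {0..1}"
    using subsum_bounds[OF summable_dyadic] sums_unique[OF sums_dyadic]
    by (auto simp: achievement_set_def less_imp_le[OF dyadic_pos])
next
  fix t :: real assume t: "t \<in> {0..1}"
  have "subsum dyadic UNIV = 1" using sums_unique[OF sums_dyadic] by (simp add: subsum_def)
  then show "t \<in> achievement_set dyadic"
    using t subsum_dyadic_binary_expansion[of t] unfolding achievement_set_def
    by (cases "t = 1") auto
qed

definition avoiding_cover :: "nat set \<Rightarrow> nat \<Rightarrow> real set" where
  "avoiding_cover C N = (\<Union>S\<in>Pow ({..<N} - C). {sum dyadic S .. sum dyadic S + (1/2)^N})"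

definition avoiding_sums :: "nat set \<Rightarrow> real set" where
  "avoiding_sums C = (\<Inter>N. avoiding_cover C N)"

lemma subsum_in_avoiding_sums:
  assumes "B \<inter> C = {}" shows "subsum dyadic B \<in> avoiding_sums C"
  unfolding avoiding_sums_def avoiding_cover_def
proof
  fix N
  have "{..<N} \<inter> B \<in> Pow ({..<N} - C)" using assms by auto
  then show "subsum dyadic B \<in>
      (\<Union>S\<in>Pow ({..<N} - C). {sum dyadic S .. sum dyadic S + (1/2)^N})"
    using subsum_in_initial_segment_interval[OF summable_dyadic, of B N]
    by (auto simp: suminf_dyadic_shift less_imp_le[OF dyadic_pos])
qed

lemma closed_avoiding_sums: "closed (avoiding_sums C)"
  unfolding avoiding_sums_def avoiding_cover_def by (intro closed_INT closed_UN) auto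

lemma lmeasurable_avoiding_cover: "avoiding_cover C N \<in> lmeasurable"
  unfolding avoiding_cover_def by (intro fmeasurable.finite_UN) auto

lemma measure_avoiding_cover:
  "measure lebesgue (avoiding_cover C N) \<le> (1/2)^card (C \<inter> {..<N})"
proof -
  let ?D = "{..<N} - C"
  have "card ?D + card (C \<inter> {..<N}) = N"
    using card_Diff_subset_Int[of "{..<N}" C] card_mono[of "{..<N}" "{..<N} \<inter> C"]
    by (simp add: Int_commute)
  then have split: "(1/2::real)^N = (1/2)^card ?D * (1/2)^card (C \<inter> {..<N})"
    by (metis power_add)
  have "measure lebesgue (avoiding_cover C N) \<le>
      (\<Sum>S\<in>Pow ?D. measure lebesgue {sum dyadic S .. sum dyadic S + (1/2)^N})"
    unfolding avoiding_cover_def by (intro measure_UNION_le) auto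
  also have "\<dots> = 2^card ?D * (1/2)^N" by (simp add: card_Pow)
  also have "\<dots> = (1/2)^card (C \<inter> {..<N})" using split by (simp add: power_one_over)
  finally show ?thesis .
qed

lemma negligible_avoiding_sums:
  assumes "infinite C" shows "negligible (avoiding_sums C)"
proof (subst negligible_outer_le, intro allI impI)
  fix e :: real assume "e > 0"
  then obtain m where m: "(1/2::real)^m < e" using real_arch_pow_inv[of e "1/2"] by force
  obtain S where S: "finite S" "card S = m" "S \<subseteq> C"
    using infinite_arbitrarily_large[OF assms] by blast
  obtain N where "S \<subseteq> {..<N}" using finite_nat_bounded[OF S(1)] by blast
  with S have "m \<le> card (C \<inter> {..<N})"
    by (metis card_mono finite_Int finite_lessThan le_inf_iff)
  then have "(1/2::real)^card (C \<inter> {..<N}) \<le> (1/2)^m" by (intro power_decreasing) auto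
  then have "measure lebesgue (avoiding_cover C N) \<le> e"
    using measure_avoiding_cover[of C N] m by linarith
  moreover have "avoiding_sums C \<subseteq> avoiding_cover C N" unfolding avoiding_sums_def by blast
  ultimately show "\<exists>T. avoiding_sums C \<subseteq> T \<and> T \<in> lmeasurable \<and> measure lebesgue T \<le> e"
    using lmeasurable_avoiding_cover by blast
qed

lemma nowhere_dense_if_closed_negligible:
  "closed S \<Longrightarrow> negligible S \<Longrightarrow> nowhere_dense S"
  unfolding nowhere_dense_def
  by (metis closure_closed interior_subset negligible_subset open_interior open_not_negligible)

lemma meager_null_if_covered_by_closed_negligible:
  fixes F :: "nat \<Rightarrow> real set"
  assumes "S \<subseteq> (\<Union>n. F n)" and "\<And>n. closed (F n)" and "\<And>n. negligible (F n)"
  shows "meager S" "S \<in> null_sets lebesgue"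
proof -
  show "meager S" unfolding meager_def
    using assms(1) nowhere_dense_if_closed_negligible[OF assms(2,3)] by blast
  have "negligible (\<Union>n. F n)" using assms(3) by (rule negligible_Union_nat)
  then show "S \<in> null_sets lebesgue"
    using assms(1) negligible_subset negligible_iff_null_sets by blast
qed

theorem mainTheorem15:
  fixes I :: "nat set set" and C :: "nat set"
  assumes "is_ideal I" and "Fin \<subseteq> I" and "I \<noteq> Fin"
    and "infinite C"
    and "\<forall>D. D \<subseteq> C \<and> D \<in> I \<longrightarrow> finite D"
    and "UNIV - C \<in> I"
  shows "\<exists>x \<in> ell1_star. (\<exists>a b. a < b \<and> achievement_set x = {a..b})
           \<and> meager (ideal_achievement_set I x)
           \<and> ideal_achievement_set I x \<in> null_sets lebesgue"
proof -
  define F where "F n = (+) (sum dyadic (set_decode n)) ` avoiding_sums C" for n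
  have "ideal_achievement_set I dyadic \<subseteq> (\<Union>n. F n)"
  proof
    fix y assume "y \<in> ideal_achievement_set I dyadic"
    then obtain A where A: "A \<in> I" "y = subsum dyadic A"
      unfolding ideal_achievement_set_def by auto
    then have "A \<inter> C \<in> I" using assms(1) unfolding is_ideal_def by blast
    then have fin: "finite (A \<inter> C)" using assms(5) by blast
    have "y = sum dyadic (A \<inter> C) + subsum dyadic (A - C)"
      using A(2) subsum_Int_Diff[of dyadic A C] summable_dyadic subsum_finite[OF fin]
      by (simp add: less_imp_le[OF dyadic_pos])
    then have "y \<in> F (set_encode (A \<inter> C))"
      unfolding F_def using fin subsum_in_avoiding_sums[of "A - C" C] by auto
    then show "y \<in> (\<Union>n. F n)" by blast
  qed
  moreover have "closed (F n)" "negligible (F n)" for n unfolding F_def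
    by (simp_all add: closed_translation closed_avoiding_sums
        negligible_translation negligible_avoiding_sums assms(4))
  ultimately have "meager (ideal_achievement_set I dyadic)"
      "ideal_achievement_set I dyadic \<in> null_sets lebesgue"
    by (rule meager_null_if_covered_by_closed_negligible)+
  moreover have "\<exists>a b. a < b \<and> achievement_set dyadic = {a..b}"
    using achievement_set_dyadic by (intro exI[of _ 0] exI[of _ 1]) simp
  ultimately show ?thesis using dyadic_in_ell1_star by blast
qed

end
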